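(* Assume Assumptions 1, 2, 3 (stated in the context). Every call of Line-Search (Algorithm 3) made by Algorithm 1 (both described in the context), started from a feasible $\theta$, makes finitely many calls to subdivision, i.e. terminates finitely.
   Context: Problem: for $\theta$ and $t\in[0,T]$, body $i$ occupies $b_i(t,\theta)\subset\mathbb{R}^3$, obstacles occupy $o$; $\text{dist}$ is the shortest Euclidean distance between sets; $d_0\ge0$; $\mathcal{O}(\theta)$ twice differentiable cost; SIP: minimize $\mathcal{O}$ s.t. $\text{dist}(b_i(t,\theta),o)\ge d_0$ for all $i,t$ ($\theta$ feasible if all constraints hold). Assumption 1: finite decompositions $b_i=\bigcup_j b_{ij}$, $o=\bigcup_k o_k$ with each $(t,\theta)\mapsto\text{dist}(b_{ij}(t,\theta),o_k)$ sufficiently smooth. Assumption 2: the feasible domain of $t,\theta$ is bounded. Assumption 3: $\mathcal{P}$ sufficiently smooth, monotonically decreasing on $(0,\infty)$, $\lim_{x\to0}\mathcal{P}=\infty$, $\lim_{x\to\infty}\mathcal{P}=0$, $\lim_{x\to0}x\mathcal{P}(x)=\infty$. $L_1$: a constant with $|\text{dist}(b_{ij}(t_1,\theta),o_k)-\text{dist}(b_{ij}(t_2,\theta),o_k)|\le L_1|t_1-t_2|$ for all arguments. $\mathcal{P}_{ijk}(t,\theta)=\mathcal{P}(\text{dist}(b_{ij}(t,\theta),o_k)-d_0)$; per triple a finite partition of $[0,T]$ into intervals $[T_0^l,T_1^l]$; subdividing $(i,j,k,l)$ replaces the interval by its two halves; $\mathcal{P}_{ijkl}(\theta)=\mathcal{P}_{ijk}((T_0^l+T_1^l)/2,\theta)$;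 $\mathcal{E}=\mathcal{O}+\mu\sum_{ijkl}(T_1^l-T_0^l)\mathcal{P}_{ijkl}$, $\mu>0$. Directions $d^{(1)}=-\nabla_\theta\mathcal{E}$ or $d^{(2)}=\mathcal{M}(\nabla^2_\theta\mathcal{E})^{-1}d^{(1)}$ with $\underline\beta I\preceq\mathcal{M}(H)\preceq\bar\beta I$. Wolfe: $\mathcal{E}(\theta+d\alpha)\le\mathcal{E}(\theta)+c\langle d\alpha,\nabla\mathcal{E}\rangle$, $c\in(0,1)$. Safety check at $\theta$: $\psi(x)=L_1x/2+L_2x^\eta$ ($L_2,\eta>0$); return a tuple $(i,j,k,l)$ with $\text{dist}(b_{ij}((T_0^l+T_1^l)/2,\theta),o_k)\le d_0+\psi(T_1^l-T_0^l)$ if one exists, else None. Line-Search$(\theta,d,\epsilon_\alpha)$ (Algorithm 3; $\alpha_0>0,\gamma\in(0,1)$): $\alpha=\alpha_0$; while $\theta+d\alpha$ fails the safety check or Wolfe: if the check returned $(i,j,k,l)$, then if $\alpha\le\epsilon_\alpha$: $\epsilon_\alpha\leftarrow\gamma\epsilon_\alpha$, subdivide $(i,j,k,l)$, re-evaluate $\mathcal{E}$, recompute $d$; else $\alpha\leftarrow\gamma\alpha$; if only Wolfe fails, $\alpha\leftarrow\gamma\alpha$. Return $\alpha,\epsilon_\alpha$. Algorithm 1: input feasible $\theta$, $\mu$, $\epsilon_\alpha,\epsilon_d,\epsilon_\mu>0$, $\gamma\in(0,1)$; while $\mu>\epsilon_\mu$: compute $d$; while $\|d\|_\infty>\epsilon_d$: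 $(\alpha,\epsilon_\alpha)\leftarrow$Line-Search$(\theta,d,\epsilon_\alpha)$, $\theta\leftarrow\theta+d\alpha$, recompute $d$; $\mu\leftarrow\gamma\mu$. Return $\theta$. *)

theory Defs
  imports "HOL-Analysis.Analysis"
begin

definition twice_differentiable_on ::
  "'a::euclidean_space set \<Rightarrow> ('a \<Rightarrow> real) \<Rightarrow> bool" where
  "twice_differentiable_on S f \<longleftrightarrow>
     (\<exists>(f' :: 'a \<Rightarrow> ('a \<Rightarrow>\<^sub>L real)) (f'' :: 'a \<Rightarrow> ('a \<Rightarrow>\<^sub>L ('a \<Rightarrow>\<^sub>L real))).
        (\<forall>x\<in>S. (f has_derivative blinfun_apply (f' x)) (at x)) \<and>
        (\<forall>x\<in>S. (f' has_derivative blinfun_apply (f'' x)) (at x)))"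

definition C2_on :: "'a::euclidean_space set \<Rightarrow> ('a \<Rightarrow> real) \<Rightarrow> bool" where
  "C2_on S f \<longleftrightarrow>
     (\<exists>(f' :: 'a \<Rightarrow> ('a \<Rightarrow>\<^sub>L real)) (f'' :: 'a \<Rightarrow> ('a \<Rightarrow>\<^sub>L ('a \<Rightarrow>\<^sub>L real))).
        (\<forall>x\<in>S. (f has_derivative blinfun_apply (f' x)) (at x)) \<and>
        (\<forall>x\<in>S. (f' has_derivative blinfun_apply (f'' x)) (at x)) \<and>
        continuous_on S f'')"

definition grad :: "(real^'n \<Rightarrow> real) \<Rightarrow> real^'n \<Rightarrow> real^'n" where
  "grad f x = (SOME g. (f has_derivative (\<lambda>h. g \<bullet> h)) (at x))"

definition hess :: "(real^'n \<Rightarrow> real) \<Rightarrow> real^'n \<Rightarrow> real^'n^'n" where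
  "hess f x = (SOME H. (grad f has_derivative (\<lambda>h. H *v h)) (at x))"

text \<open>A partition of [0,T] is represented by its finite set of breakpoints
  (containing 0 and T); its intervals [T0,T1] are the pairs of consecutive
  breakpoints. A partition state assigns such a set to every triple p = (i,j,k).
  A tuple (i,j,k,l) is represented as (p,(T0,T1)).\<close>

type_synonym 'p partition_state = "'p \<Rightarrow> real set"

definition is_partition :: "real \<Rightarrow> real set \<Rightarrow> bool" where
  "is_partition T X \<longleftrightarrow> finite X \<and> 0 \<in> X \<and> T \<in> X \<and> X \<subseteq> {0..T}"

definition intervals :: "real set \<Rightarrow> (real \<times> real) set" where
  "intervals X = {(a,b). a \<in> X \<and> b \<in> X \<and> a < b \<and> {a<..<b} \<inter> X = {}}"

definition subdivide :: "'p partition_state \<Rightarrow> 'p \<times> (real \<times> real) \<Rightarrow> 'p partition_state" where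
  "subdivide Q tp = Q(fst tp := insert ((fst (snd tp) + snd (snd tp)) / 2) (Q (fst tp)))"

text \<open>Dist p t \<theta> = dist(b_ij(t,\<theta>), o_k) for p = (i,j,k).\<close>

definition energy ::
  "(real^'n \<Rightarrow> real) \<Rightarrow> (real \<Rightarrow> real) \<Rightarrow> ('p \<Rightarrow> real \<Rightarrow> real^'n \<Rightarrow> real) \<Rightarrow> 'p set \<Rightarrow> real
   \<Rightarrow> real \<Rightarrow> 'p partition_state \<Rightarrow> real^'n \<Rightarrow> real" where
  "energy Obj Pen Dist Trip d0 \<mu> Q \<theta> =
     Obj \<theta> + \<mu> * (\<Sum>p\<in>Trip. \<Sum>(a,b)\<in>intervals (Q p). (b - a) * Pen (Dist p ((a + b) / 2) \<theta> - d0))"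

definition directions ::
  "(real^'n^'n \<Rightarrow> real^'n^'n) \<Rightarrow> (real^'n \<Rightarrow> real) \<Rightarrow> real^'n \<Rightarrow> (real^'n) set" where
  "directions M E \<theta> = {- grad E \<theta>, matrix_inv (M (hess E \<theta>)) *v (- grad E \<theta>)}"

definition psi :: "real \<Rightarrow> real \<Rightarrow> real \<Rightarrow> real \<Rightarrow> real" where
  "psi L1 L2 \<eta> x = L1 * x / 2 + L2 * x powr \<eta>"

text \<open>Tuples the safety check may return at \<theta> (it returns None iff this set is empty).\<close>
definition unsafe_tuples ::
  "('p \<Rightarrow> real \<Rightarrow> real^'n \<Rightarrow> real) \<Rightarrow> 'p set \<Rightarrow> real \<Rightarrow> real \<Rightarrow> real \<Rightarrow> real
   \<Rightarrow> 'p partition_state \<Rightarrow> real^'n \<Rightarrow> ('p \<times> (real \<times> real)) set" where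
  "unsafe_tuples Dist Trip d0 L1 L2 \<eta> Q \<theta> =
     {(p,(a,b)). p \<in> Trip \<and> (a,b) \<in> intervals (Q p) \<and>
        Dist p ((a + b) / 2) \<theta> \<le> d0 + psi L1 L2 \<eta> (b - a)}"

definition wolfe :: "(real^'n \<Rightarrow> real) \<Rightarrow> real \<Rightarrow> real^'n \<Rightarrow> real^'n \<Rightarrow> real \<Rightarrow> bool" where
  "wolfe E c \<theta> d \<alpha> \<longleftrightarrow> E (\<theta> + \<alpha> *\<^sub>R d) \<le> E \<theta> + c * ((\<alpha> *\<^sub>R d) \<bullet> grad E \<theta>)"

text \<open>State of Line-Search: (partition state, eps_alpha, alpha, d). Parameters:
  Obj Pen Dist Trip d0 L1 L2 eta M c gamma mu theta.\<close>

definition ls_continue ::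
  "(real^'n \<Rightarrow> real) \<Rightarrow> (real \<Rightarrow> real) \<Rightarrow> ('p \<Rightarrow> real \<Rightarrow> real^'n \<Rightarrow> real) \<Rightarrow> 'p set \<Rightarrow> real
   \<Rightarrow> real \<Rightarrow> real \<Rightarrow> real \<Rightarrow> real \<Rightarrow> real \<Rightarrow> real^'n
   \<Rightarrow> 'p partition_state \<times> real \<times> real \<times> (real^'n) \<Rightarrow> bool" where
  "ls_continue Obj Pen Dist Trip d0 L1 L2 \<eta> c \<mu> \<theta> s =
     (case s of (Q, \<epsilon>, \<alpha>, d) \<Rightarrow>
        unsafe_tuples Dist Trip d0 L1 L2 \<eta> Q (\<theta> + \<alpha> *\<^sub>R d) \<noteq> {} \<or>
        \<not> wolfe (energy Obj Pen Dist Trip d0 \<mu> Q) c \<theta> d \<alpha>)"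

text \<open>One iteration of the while loop; the boolean label is True iff the
  iteration performs a subdivision. The choice of the returned tuple and of the
  direction (d1 or d2) is left nondeterministic.\<close>

definition ls_step ::
  "(real^'n \<Rightarrow> real) \<Rightarrow> (real \<Rightarrow> real) \<Rightarrow> ('p \<Rightarrow> real \<Rightarrow> real^'n \<Rightarrow> real) \<Rightarrow> 'p set \<Rightarrow> real
   \<Rightarrow> real \<Rightarrow> real \<Rightarrow> real \<Rightarrow> (real^'n^'n \<Rightarrow> real^'n^'n) \<Rightarrow> real \<Rightarrow> real \<Rightarrow> real \<Rightarrow> real^'n
   \<Rightarrow> 'p partition_state \<times> real \<times> real \<times> (real^'n) \<Rightarrow> bool
   \<Rightarrow> 'p partition_state \<times> real \<times> real \<times> (real^'n) \<Rightarrow> bool" where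
  "ls_step Obj Pen Dist Trip d0 L1 L2 \<eta> M c \<gamma> \<mu> \<theta> s sub s' \<longleftrightarrow>
     ls_continue Obj Pen Dist Trip d0 L1 L2 \<eta> c \<mu> \<theta> s \<and>
     (case s of (Q, \<epsilon>, \<alpha>, d) \<Rightarrow>
        (\<exists>tp \<in> unsafe_tuples Dist Trip d0 L1 L2 \<eta> Q (\<theta> + \<alpha> *\<^sub>R d).
            (\<alpha> \<le> \<epsilon> \<and> sub \<and>
               (\<exists>d'. d' \<in> directions M (energy Obj Pen Dist Trip d0 \<mu> (subdivide Q tp)) \<theta> \<and>
                     s' = (subdivide Q tp, \<gamma> * \<epsilon>, \<alpha>, d'))) \<or>
            (\<not> \<alpha> \<le> \<epsilon> \<and> \<not> sub \<and> s' = (Q, \<epsilon>, \<gamma> * \<alpha>, d))) \<or>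
        (unsafe_tuples Dist Trip d0 L1 L2 \<eta> Q (\<theta> + \<alpha> *\<^sub>R d) = {} \<and> \<not> sub \<and>
            s' = (Q, \<epsilon>, \<gamma> * \<alpha>, d)))"

datatype ('p, 'n) alg_state =
    Outer "real^'n" real "'p partition_state" real   \<comment> \<open>head of the outer while loop: theta, mu, partition, eps_alpha\<close>
  | Inner "real^'n" real "'p partition_state" real "real^'n" \<comment> \<open>head of the inner while loop: ..., d\<close>

text \<open>A Line-Search call is made
  from a reachable Inner state whose d has infinity norm > eps_d; the algorithm continues
  after the call only if that call terminated.\<close>

inductive alg_reach ::
  "(real^'n \<Rightarrow> real) \<Rightarrow> (real \<Rightarrow> real) \<Rightarrow> ('p \<Rightarrow> real \<Rightarrow> real^'n \<Rightarrow> real) \<Rightarrow> 'p set \<Rightarrow> real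
   \<Rightarrow> real \<Rightarrow> real \<Rightarrow> real \<Rightarrow> (real^'n^'n \<Rightarrow> real^'n^'n) \<Rightarrow> real \<Rightarrow> real \<Rightarrow> real
   \<Rightarrow> real \<Rightarrow> real \<Rightarrow> real \<Rightarrow> real^'n \<Rightarrow> real \<Rightarrow> 'p partition_state \<Rightarrow> real
   \<Rightarrow> ('p, 'n) alg_state \<Rightarrow> bool"
  for Obj Pen Dist Trip d0 L1 L2 \<eta> M c \<gamma>ls \<alpha>0 \<gamma> \<epsilon>d \<epsilon>\<mu> \<theta>0 \<mu>0 Q0 \<epsilon>\<alpha>0
  where
  start: "alg_reach Obj Pen Dist Trip d0 L1 L2 \<eta> M c \<gamma>ls \<alpha>0 \<gamma> \<epsilon>d \<epsilon>\<mu> \<theta>0 \<mu>0 Q0 \<epsilon>\<alpha>0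
            (Outer \<theta>0 \<mu>0 Q0 \<epsilon>\<alpha>0)"
| outer: "alg_reach Obj Pen Dist Trip d0 L1 L2 \<eta> M c \<gamma>ls \<alpha>0 \<gamma> \<epsilon>d \<epsilon>\<mu> \<theta>0 \<mu>0 Q0 \<epsilon>\<alpha>0
            (Outer \<theta> \<mu> Q \<epsilon>) \<Longrightarrow> \<mu> > \<epsilon>\<mu> \<Longrightarrow>
          d \<in> directions M (energy Obj Pen Dist Trip d0 \<mu> Q) \<theta> \<Longrightarrow>
          alg_reach Obj Pen Dist Trip d0 L1 L2 \<eta> M c \<gamma>ls \<alpha>0 \<gamma> \<epsilon>d \<epsilon>\<mu> \<theta>0 \<mu>0 Q0 \<epsilon>\<alpha>0
            (Inner \<theta> \<mu> Q \<epsilon> d)"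
| inner_exit: "alg_reach Obj Pen Dist Trip d0 L1 L2 \<eta> M c \<gamma>ls \<alpha>0 \<gamma> \<epsilon>d \<epsilon>\<mu> \<theta>0 \<mu>0 Q0 \<epsilon>\<alpha>0
            (Inner \<theta> \<mu> Q \<epsilon> d) \<Longrightarrow> infnorm d \<le> \<epsilon>d \<Longrightarrow>
          alg_reach Obj Pen Dist Trip d0 L1 L2 \<eta> M c \<gamma>ls \<alpha>0 \<gamma> \<epsilon>d \<epsilon>\<mu> \<theta>0 \<mu>0 Q0 \<epsilon>\<alpha>0
            (Outer \<theta> (\<gamma> * \<mu>) Q \<epsilon>)"
| inner_step: "alg_reach Obj Pen Dist Trip d0 L1 L2 \<eta> M c \<gamma>ls \<alpha>0 \<gamma> \<epsilon>d \<epsilon>\<mu> \<theta>0 \<mu>0 Q0 \<epsilon>\<alpha>0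
            (Inner \<theta> \<mu> Q \<epsilon> d) \<Longrightarrow> infnorm d > \<epsilon>d \<Longrightarrow>
          (\<lambda>s s'. \<exists>sub. ls_step Obj Pen Dist Trip d0 L1 L2 \<eta> M c \<gamma>ls \<mu> \<theta> s sub s')\<^sup>*\<^sup>*
            (Q, \<epsilon>, \<alpha>0, d) (Q', \<epsilon>', \<alpha>, d') \<Longrightarrow>
          \<not> ls_continue Obj Pen Dist Trip d0 L1 L2 \<eta> c \<mu> \<theta> (Q', \<epsilon>', \<alpha>, d') \<Longrightarrow>
          d'' \<in> directions M (energy Obj Pen Dist Trip d0 \<mu> Q') (\<theta> + \<alpha> *\<^sub>R d') \<Longrightarrow>
          alg_reach Obj Pen Dist Trip d0 L1 L2 \<eta> M c \<gamma>ls \<alpha>0 \<gamma> \<epsilon>d \<epsilon>\<mu> \<theta>0 \<mu>0 Q0 \<epsilon>\<alpha>0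
            (Inner (\<theta> + \<alpha> *\<^sub>R d') \<mu> Q' \<epsilon>' d'')"

end

theory Submission
  imports Defs
begin

(* Suppose Line-Search ran forever from a strictly feasible \<theta>.  If it subdivided only finitely
   often, from some point on the partition, \<epsilon>\<^sub>\<alpha> and the direction d stay fixed while \<alpha> shrinks
   geometrically; d is a descent direction of the differentiable penalised energy, so small steps
   satisfy the Wolfe condition and \<alpha> \<le> \<epsilon>\<^sub>\<alpha>, and the loop would stop.  Hence it subdivides
   infinitely often.  Each subdivision requires \<alpha> \<le> \<epsilon>\<^sub>\<alpha> and multiplies \<epsilon>\<^sub>\<alpha> by \<gamma>, so \<alpha> \<rightarrow> 0;
   the gradients of the energies of all partitions are uniformly bounded at \<theta>, hence so are the
   directions, and the trial points converge to \<theta>.  Near \<theta> every distance exceeds d\<^sub>0 + \<delta>, so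
   the safety check only returns intervals of length at least some h > 0, and halving such an
   interval lowers a nonnegative potential by one: only finitely many subdivisions are possible.
   That \<theta> is strictly feasible at every call is an invariant of Algorithm 1, because a point
   passing the safety check is strictly feasible by the Lipschitz bound L\<^sub>1 built into \<psi>. *)

section \<open>Gradients and search directions\<close>

lemma has_derivative_grad:
  fixes E :: "real^'n \<Rightarrow> real"
  assumes "(E has_derivative E') (at x)"
  shows "(E has_derivative (\<lambda>h. grad E x \<bullet> h)) (at x)"
proof -
  have lin: "linear E'" using assms has_derivative_linear by blast
  have "E' h = (\<Sum>i\<in>Basis. E' i *\<^sub>R i) \<bullet> h" for h
  proof -
    have "E' h = E' (\<Sum>i\<in>Basis. (h \<bullet> i) *\<^sub>R i)" by (simp add: euclidean_representation)
    also have "\<dots> = (\<Sum>i\<in>Basis. (h \<bullet> i) * E' i)" by (simp add: linear_sum[OF lin] linear_scale[OF lin])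
    also have "\<dots> = (\<Sum>i\<in>Basis. (E' i *\<^sub>R i) \<bullet> h)" by (rule sum.cong) (simp_all add: inner_commute)
    finally show ?thesis by (simp only: inner_sum_left)
  qed
  then have "E' = (\<lambda>h. (\<Sum>i\<in>Basis. E' i *\<^sub>R i) \<bullet> h)" by blast
  with assms have "\<exists>g. (E has_derivative (\<lambda>h. g \<bullet> h)) (at x)" by metis
  then show ?thesis unfolding grad_def by (rule someI_ex)
qed

lemma inner_grad:
  fixes E :: "real^'n \<Rightarrow> real"
  assumes "(E has_derivative E') (at x)"
  shows "grad E x \<bullet> h = E' h"
  using has_derivative_unique[OF has_derivative_grad[OF assms] assms] by metis

lemma grad_eqI:
  fixes E :: "real^'n \<Rightarrow> real"
  assumes "(E has_derivative (\<lambda>h. g \<bullet> h)) (at x)"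
  shows "grad E x = g"
proof -
  have "(grad E x - g) \<bullet> h = 0" for h
    using inner_grad[OF assms] by (simp add: inner_diff_left)
  then show ?thesis by (metis inner_eq_zero_iff right_minus_eq)
qed

lemma norm_grad_le:
  fixes E :: "real^'n \<Rightarrow> real"
  assumes "(E has_derivative E') (at x)" "\<And>h. \<bar>E' h\<bar> \<le> C * norm h" "0 \<le> C"
  shows "norm (grad E x) \<le> C"
proof (cases "grad E x = 0")
  case False
  have "norm (grad E x) * norm (grad E x) = E' (grad E x)"
    using inner_grad[OF assms(1)] by (simp flip: dot_square_norm power2_eq_square)
  also have "\<dots> \<le> C * norm (grad E x)"
    using assms(2) abs_ge_self order_trans by blast
  finally show ?thesis using False by simp
qed (use assms in simp)

lemma coercive_matrix_inv:
  fixes A :: "real^'n^'n" and g :: "real^'n"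
  assumes coercive: "\<And>x. \<beta> * (x \<bullet> x) \<le> x \<bullet> (A *v x)" and "0 < \<beta>"
  defines "y \<equiv> matrix_inv A *v g"
  shows "\<beta> * (y \<bullet> y) \<le> y \<bullet> g" and "\<beta> * norm y \<le> norm g"
proof -
  have "x = 0" if "A *v x = 0" for x
  proof -
    have "x \<bullet> x \<le> 0" using coercive[of x] that \<open>0 < \<beta>\<close> by (simp add: mult_le_0_iff)
    then show ?thesis by (metis inner_eq_zero_iff inner_ge_zero order_antisym)
  qed
  then have "invertible A"
    by (simp add: invertible_left_inverse matrix_left_invertible_ker)
  then have "A ** matrix_inv A = mat 1"
    unfolding invertible_def matrix_inv_def by (rule someI_ex[THEN conjunct1])
  then have "A *v y = g"
    by (simp add: y_def matrix_vector_mul_assoc)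
  with coercive show yg: "\<beta> * (y \<bullet> y) \<le> y \<bullet> g" by metis
  show "\<beta> * norm y \<le> norm g"
  proof (cases "y = 0")
    case False
    have "norm y * (\<beta> * norm y) = \<beta> * (y \<bullet> y)" by (simp add: dot_square_norm power2_eq_square)
    also have "\<dots> \<le> norm y * norm g" using yg Cauchy_Schwarz_ineq2[of y g] by linarith
    finally show ?thesis using False by simp
  qed simp
qed

lemma norm_direction_le:
  fixes M :: "real^'n^'n \<Rightarrow> real^'n^'n"
  assumes "\<And>H x. \<beta> * (x \<bullet> x) \<le> x \<bullet> (M H *v x)" "0 < \<beta>" "d \<in> directions M E \<theta>"
  shows "norm d \<le> (1 + 1 / \<beta>) * norm (grad E \<theta>)"
proof -
  have "\<And>x. \<beta> * (x \<bullet> x) \<le> x \<bullet> (M (hess E \<theta>) *v x)" using assms(1) .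
  from coercive_matrix_inv(2)[OF this assms(2)]
  have "norm (matrix_inv (M (hess E \<theta>)) *v grad E \<theta>) \<le> norm (grad E \<theta>) / \<beta>"
    using assms(2) by (simp add: field_simps)
  moreover have "d = - grad E \<theta> \<or> d = - (matrix_inv (M (hess E \<theta>)) *v grad E \<theta>)"
    using assms(3) by (auto simp: directions_def vec.neg)
  ultimately have "norm d \<le> norm (grad E \<theta>) + norm (grad E \<theta>) / \<beta>"
    using assms(2) norm_ge_zero[of "grad E \<theta>"] by (smt (verit) divide_nonneg_pos norm_minus_cancel)
  then show ?thesis by (simp add: distrib_right)
qed

lemma direction_descent:
  fixes M :: "real^'n^'n \<Rightarrow> real^'n^'n"
  assumes "\<And>H x. \<beta> * (x \<bullet> x) \<le> x \<bullet> (M H *v x)" "0 < \<beta>" "d \<in> directions M E \<theta>" "d \<noteq> 0"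
  shows "d \<bullet> grad E \<theta> < 0"
proof -
  define y where "y = matrix_inv (M (hess E \<theta>)) *v grad E \<theta>"
  have "\<And>x. \<beta> * (x \<bullet> x) \<le> x \<bullet> (M (hess E \<theta>) *v x)" using assms(1) .
  from coercive_matrix_inv(1)[OF this assms(2)] have "\<beta> * (y \<bullet> y) \<le> y \<bullet> grad E \<theta>"
    unfolding y_def .
  then have "y \<noteq> 0 \<Longrightarrow> 0 < y \<bullet> grad E \<theta>"
    using assms(2) by (smt (verit) inner_gt_zero_iff mult_pos_pos)
  moreover have "d = - grad E \<theta> \<or> d = - y"
    using assms(3) by (auto simp: directions_def y_def vec.neg)
  ultimately show ?thesis using assms(4) by auto
qed

lemma wolfe_eventually:
  fixes E :: "real^'n \<Rightarrow> real"
  assumes "E differentiable (at \<theta>)" "d \<noteq> 0 \<Longrightarrow> d \<bullet> grad E \<theta> < 0" "c < 1"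
  shows "\<forall>\<^sub>F \<alpha> in at_right 0. wolfe E c \<theta> d \<alpha>"
proof (cases "d = 0")
  case False
  define D where "D = d \<bullet> grad E \<theta>"
  have "D < c * D" using assms False by (simp add: D_def)
  obtain E' where "(E has_derivative E') (at (\<theta> + 0 *\<^sub>R d))"
    using assms(1) by (auto simp: differentiable_def)
  note grad = has_derivative_grad[OF this]
  have "((\<lambda>\<alpha>. \<theta> + \<alpha> *\<^sub>R d) has_derivative (\<lambda>\<alpha>. \<alpha> *\<^sub>R d)) (at 0)"
    by (auto intro!: derivative_eq_intros)
  from has_derivative_compose[OF this grad]
  have "((\<lambda>\<alpha>. E (\<theta> + \<alpha> *\<^sub>R d)) has_derivative (\<lambda>\<alpha>. grad E \<theta> \<bullet> (\<alpha> *\<^sub>R d))) (at 0)"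
    by simp
  then have "((\<lambda>\<alpha>. E (\<theta> + \<alpha> *\<^sub>R d)) has_field_derivative D) (at 0)"
    by (rule has_derivative_imp_has_field_derivative) (simp add: D_def inner_commute)
  then have "((\<lambda>\<alpha>. (E (\<theta> + \<alpha> *\<^sub>R d) - E \<theta>) / \<alpha>) \<longlongrightarrow> D) (at_right 0)"
    by (auto simp: has_field_derivative_iff intro: tendsto_mono[OF at_le])
  then have "\<forall>\<^sub>F \<alpha> in at_right 0. (E (\<theta> + \<alpha> *\<^sub>R d) - E \<theta>) / \<alpha> < c * D"
    using \<open>D < c * D\<close> by (rule order_tendstoD)
  then show ?thesis
    using eventually_at_right_less[of 0]
    by eventually_elim (simp add: wolfe_def D_def divide_less_eq algebra_simps)
qed (simp add: wolfe_def)

section \<open>Partitions of the time interval\<close>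

lemma mem_intervals_iff:
  "(a, b) \<in> intervals X \<longleftrightarrow> a \<in> X \<and> b \<in> X \<and> a < b \<and> (\<forall>x\<in>X. x \<le> a \<or> b \<le> x)"
  unfolding intervals_def by force

lemma finite_intervals: "finite X \<Longrightarrow> finite (intervals X)"
  by (rule finite_subset[of _ "X \<times> X"]) (auto simp: intervals_def)

lemma intervals_insert_greater:
  assumes "finite X" "X \<noteq> {}" "\<forall>x\<in>X. x < b"
  shows "intervals (insert b X) = insert (Max X, b) (intervals X)"
proof -
  have "(u, v) \<in> intervals (insert b X) \<longleftrightarrow> (u, v) \<in> insert (Max X, b) (intervals X)" for u v
  proof
    assume uv: "(u, v) \<in> intervals (insert b X)"
    show "(u, v) \<in> insert (Max X, b) (intervals X)"
    proof (cases "v = b")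
      case True
      with uv assms have "u \<in> X" "\<forall>x\<in>X. x \<le> u \<or> b \<le> x"
        by (auto simp: mem_intervals_iff)
      then have "u = Max X"
        using assms Max_in[OF assms(1,2)] Max_ge[OF assms(1)] by (meson antisym not_le)
      then show ?thesis using True by simp
    next
      case False
      with uv assms show ?thesis by (auto simp: mem_intervals_iff)
    qed
  next
    assume "(u, v) \<in> insert (Max X, b) (intervals X)"
    then consider "u = Max X" "v = b" | "(u, v) \<in> intervals X" by blast
    then show "(u, v) \<in> intervals (insert b X)"
    proof cases
      case 1
      have "Max X \<in> X" "Max X < b" using assms Max_in[OF assms(1,2)] by auto
      with 1 show ?thesis using Max_ge[OF assms(1)] by (auto simp: mem_intervals_iff)
    next
      case 2
      with assms show ?thesis by (auto simp: mem_intervals_iff)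
    qed
  qed
  then show ?thesis by auto
qed

lemma sum_interval_lengths:
  assumes "finite X" "X \<noteq> {}"
  shows "(\<Sum>(a, b)\<in>intervals X. b - a) = Max X - Min X"
  using assms
proof (induction X rule: finite_linorder_max_induct)
  case (insert b X)
  show ?case
  proof (cases "X = {}")
    case True
    then have "intervals (insert b X) = {}" by (auto simp: intervals_def)
    then show ?thesis using True by simp
  next
    case False
    have "(Max X, b) \<notin> intervals X"
      using Max_ge[OF insert.hyps(1)] insert.hyps(2) by (auto simp: mem_intervals_iff)
    then show ?thesis
      using False insert by (simp add: intervals_insert_greater finite_intervals max_absorb1 less_imp_le)
  qed
qed simp

lemma intervals_cover:
  assumes "finite X" "u \<in> X" "v \<in> X" "u \<le> t" "t \<le> v" "u < v"
  shows "\<exists>(a, b)\<in>intervals X. a \<le> t \<and> t \<le> b"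
proof -
  define a where "a = Max {x\<in>X. x \<le> t \<and> x < v}"
  define b where "b = Min {x\<in>X. a < x}"
  have a: "a \<in> {x\<in>X. x \<le> t \<and> x < v}"
    unfolding a_def by (rule Max_in) (use assms in auto)
  have a_greatest: "x \<le> a" if "x \<in> X" "x \<le> t" "x < v" for x
    using that assms unfolding a_def by (auto intro: Max_ge)
  have b: "b \<in> {x\<in>X. a < x}"
    unfolding b_def by (rule Min_in) (use assms a in auto)
  have b_least: "b \<le> x" if "x \<in> X" "a < x" for x
    using that assms unfolding b_def by (auto intro: Min_le)
  have "(a, b) \<in> intervals X"
    using a b b_least by (force simp: mem_intervals_iff)
  moreover have "t \<le> b"
  proof (rule ccontr)
    assume "\<not> t \<le> b"
    moreover have "b \<le> v" using b_least a assms(3) by simp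
    ultimately show False using a_greatest[of b] a b assms(5) by force
  qed
  ultimately show ?thesis using a by auto
qed

lemma intervals_insert_betweenD:
  assumes ab: "(a, b) \<in> intervals X" and m: "a < m" "m < b"
    and uv: "(u, v) \<in> intervals (insert m X)"
  shows "(u, v) \<in> insert (a, m) (insert (m, b) (intervals X - {(a, b)}))"
proof -
  have ab': "a \<in> X" "b \<in> X" "\<forall>x\<in>X. x \<le> a \<or> b \<le> x"
    using ab by (auto simp: mem_intervals_iff)
  consider "u = m" | "v = m" | "u \<noteq> m" "v \<noteq> m" by blast
  then show ?thesis
  proof cases
    case 1
    with uv m have "v \<in> X" "m < v" "b \<le> m \<or> v \<le> b" using ab'(2) by (auto simp: mem_intervals_iff)
    with ab'(3) m have "v = b" by force
    with 1 show ?thesis by simp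
  next
    case 2
    with uv m have "u \<in> X" "u < m" "a \<le> u \<or> m \<le> a" using ab'(1) by (auto simp: mem_intervals_iff)
    with ab'(3) m have "u = a" by force
    with 2 show ?thesis by simp
  next
    case 3
    with uv m have "(u, v) \<in> intervals X" "(u, v) \<noteq> (a, b)"
      unfolding mem_intervals_iff by auto
    then show ?thesis by simp
  qed
qed

lemma intervals_insert_betweenI:
  assumes ab: "(a, b) \<in> intervals X" and m: "a < m" "m < b"
    and uv: "(u, v) \<in> insert (a, m) (insert (m, b) (intervals X - {(a, b)}))"
  shows "(u, v) \<in> intervals (insert m X)"
proof -
  have ab': "a \<in> X" "b \<in> X" "\<forall>x\<in>X. x \<le> a \<or> b \<le> x"
    using ab by (auto simp: mem_intervals_iff)
  consider "u = a" "v = m" | "u = m" "v = b" | "(u, v) \<in> intervals X" "(u, v) \<noteq> (a, b)"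
    using uv by blast
  then show ?thesis
  proof cases
    case 3
    then have "u \<in> X" "v \<in> X" "u < v" "\<forall>x\<in>X. x \<le> u \<or> v \<le> x"
      by (auto simp: mem_intervals_iff)
    have "m \<le> u \<or> v \<le> m"
    proof (rule ccontr)
      assume "\<not> (m \<le> u \<or> v \<le> m)"
      with ab' m \<open>u \<in> X\<close> \<open>v \<in> X\<close> have "u \<le> a" "b \<le> v" by force+
      with \<open>\<forall>x\<in>X. x \<le> u \<or> v \<le> x\<close> ab' m have "u = a" "v = b" by force+
      with 3(2) show False by simp
    qed
    with 3 show ?thesis by (auto simp: mem_intervals_iff)
  qed (use ab' m in \<open>auto simp: mem_intervals_iff\<close>)
qed

lemma intervals_insert_between:
  assumes "(a, b) \<in> intervals X" "a < m" "m < b"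
  shows "intervals (insert m X) = insert (a, m) (insert (m, b) (intervals X - {(a, b)}))"
proof -
  have "(u, v) \<in> intervals (insert m X) \<longleftrightarrow>
      (u, v) \<in> insert (a, m) (insert (m, b) (intervals X - {(a, b)}))" for u v
    using intervals_insert_betweenD[OF assms] intervals_insert_betweenI[OF assms] by blast
  then show ?thesis by auto
qed

lemma partition_intervalD:
  assumes "is_partition T X" "(a, b) \<in> intervals X"
  shows "0 \<le> a" "a < b" "b \<le> T"
  using assms by (auto simp: is_partition_def mem_intervals_iff)

lemma partition_interval_lengths:
  assumes "is_partition T X"
  shows "(\<Sum>(a, b)\<in>intervals X. b - a) = T"
proof -
  have "finite X" "X \<noteq> {}" "0 \<in> X" "T \<in> X" "X \<subseteq> {0..T}"
    using assms by (auto simp: is_partition_def)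
  then have "Max X = T" "Min X = 0"
    by (auto intro!: Max_eqI Min_eqI)
  with sum_interval_lengths[OF \<open>finite X\<close> \<open>X \<noteq> {}\<close>] show ?thesis by simp
qed

lemma is_partition_subdivide:
  assumes "\<forall>q\<in>Trip. is_partition T (Q q)" "p \<in> Trip" "(a, b) \<in> intervals (Q p)"
  shows "\<forall>q\<in>Trip. is_partition T (subdivide Q (p, (a, b)) q)"
  using partition_intervalD[OF bspec[OF assms(1,2)] assms(3)] assms(1)
  by (auto simp: subdivide_def is_partition_def)

text \<open>The weight g(x) = max 0 (2x/h - 1) satisfies g(x) = 2 g(x/2) + 1 for x \<ge> h, so halving an
  interval of length at least h lowers the potential by exactly one.\<close>

definition subdivision_potential :: "real \<Rightarrow> 'p set \<Rightarrow> 'p partition_state \<Rightarrow> real" where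
  "subdivision_potential h Trip Q = (\<Sum>p\<in>Trip. \<Sum>(a, b)\<in>intervals (Q p). max 0 (2 * (b - a) / h - 1))"

lemma subdivision_potential_nonneg: "0 \<le> subdivision_potential h Trip Q"
  unfolding subdivision_potential_def by (auto intro!: sum_nonneg)

lemma subdivision_potential_subdivide:
  assumes "finite Trip" "p \<in> Trip" "finite (Q p)" and ab: "(a, b) \<in> intervals (Q p)"
    and h: "0 < h" "h \<le> b - a"
  shows "subdivision_potential h Trip (subdivide Q (p, (a, b))) + 1 = subdivision_potential h Trip Q"
proof -
  define g where "g = (\<lambda>(u, v). max 0 (2 * (v - u) / h - 1))"
  define m where "m = (a + b) / 2"
  define S where "S = intervals (Q p) - {(a, b)}"
  have m: "a < m" "m < b" and "m \<notin> Q p"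
    using ab unfolding m_def mem_intervals_iff by force+
  then have new: "(a, m) \<notin> insert (m, b) S" "(m, b) \<notin> S"
    by (auto simp: S_def mem_intervals_iff)
  have "finite S" using assms(3) by (simp add: S_def finite_intervals)
  have halves: "g (a, m) = (b - a) / h - 1" "g (m, b) = (b - a) / h - 1"
    "g (a, b) = 2 * (b - a) / h - 1"
    using h by (auto simp: g_def m_def field_simps)
  have "sum g (intervals (insert m (Q p))) + 1 = g (a, b) + sum g S"
    using new \<open>finite S\<close> halves
    by (simp add: intervals_insert_between[OF ab m] S_def[symmetric])
  also have "\<dots> = sum g (intervals (Q p))"
    using ab assms(3) by (simp add: S_def finite_intervals sum.remove)
  finally have halving: "sum g (intervals (insert m (Q p))) + 1 = sum g (intervals (Q p))" .
  have potential_split: "subdivision_potential h Trip R = sum g (intervals (R p)) + (\<Sum>q\<in>Trip - {p}. sum g (intervals (R q)))"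
    for R :: "'a partition_state"
    unfolding subdivision_potential_def g_def using assms(1,2) by (simp add: sum.remove)
  have "subdivide Q (p, (a, b)) = Q(p := insert m (Q p))"
    by (simp add: subdivide_def m_def)
  then show ?thesis
    using halving by (simp add: potential_split)
qed

lemma finite_if_potential_decreases:
  fixes \<Phi> :: "nat \<Rightarrow> real"
  assumes nonneg: "\<And>n. 0 \<le> \<Phi> n"
    and decrease: "\<forall>\<^sub>F n in sequentially. \<Phi> (Suc n) + (if P n then 1 else 0) \<le> \<Phi> n"
  shows "finite {n. P n}"
proof -
  obtain N where N: "\<And>n. N \<le> n \<Longrightarrow> \<Phi> (Suc n) + (if P n then 1 else 0) \<le> \<Phi> n"
    using decrease unfolding eventually_sequentially by blast
  have count: "\<Phi> (N + k) + card {n\<in>{N..<N + k}. P n} \<le> \<Phi> N" for k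
  proof (induction k)
    case (Suc k)
    have "{n\<in>{N..<N + Suc k}. P n} = {n\<in>{N..<N + k}. P n} \<union> (if P (N + k) then {N + k} else {})"
      by (auto simp: less_Suc_eq)
    then have "card {n\<in>{N..<N + Suc k}. P n} = card {n\<in>{N..<N + k}. P n} + (if P (N + k) then 1 else 0)"
      by (auto simp: card_insert_if)
    with Suc N[of "N + k"] show ?case by (cases "P (N + k)") simp_all
  qed simp
  have "finite {n. N \<le> n \<and> P n}"
  proof (rule ccontr)
    assume "infinite {n. N \<le> n \<and> P n}"
    then obtain F where F: "F \<subseteq> {n. N \<le> n \<and> P n}" "finite F" "card F = nat \<lceil>\<Phi> N\<rceil> + 1"
      using infinite_arbitrarily_large by blast
    define k where "k = Suc (Max F)"
    have "F \<subseteq> {n\<in>{N..<N + k}. P n}"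
    proof
      fix n assume "n \<in> F"
      then have "N \<le> n" "P n" "n \<le> Max F" using F Max_ge[OF F(2)] by auto
      then show "n \<in> {n\<in>{N..<N + k}. P n}" by (simp add: k_def)
    qed
    then have "card F \<le> card {n\<in>{N..<N + k}. P n}" by (rule card_mono[rotated]) simp
    then have "card F \<le> \<Phi> N" using count[of k] nonneg[of "N + k"] by linarith
    with F show False by linarith
  qed
  then have "finite ({..<N} \<union> {n. N \<le> n \<and> P n})" by simp
  then show ?thesis by (rule finite_subset[rotated]) auto
qed

section \<open>Feasibility\<close>

definition strictly_feasible :: "('p \<Rightarrow> real \<Rightarrow> 'a \<Rightarrow> real) \<Rightarrow> 'p set \<Rightarrow> real \<Rightarrow> real \<Rightarrow> 'a \<Rightarrow> bool" where
  "strictly_feasible Dist Trip T d0 \<theta> \<longleftrightarrow> (\<forall>p\<in>Trip. \<forall>t\<in>{0..T}. d0 < Dist p t \<theta>)"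

lemma psi_tendsto_zero:
  assumes "0 < \<eta>"
  shows "(psi L1 L2 \<eta> \<longlongrightarrow> 0) (at_right 0)"
proof -
  have "((\<lambda>x. x powr \<eta>) \<longlongrightarrow> 0) (at_right 0)"
    using assms by (intro tendsto_zero_powrI tendsto_ident_at)
      (auto intro!: eventually_mono[OF eventually_at_right_less])
  then have "((\<lambda>x. L1 * x / 2 + L2 * x powr \<eta>) \<longlongrightarrow> L1 * 0 / 2 + L2 * 0) (at_right 0)"
    by (intro tendsto_intros) auto
  then show ?thesis by (simp add: psi_def[abs_def])
qed

lemma safe_imp_strictly_feasible:
  assumes "0 < T" "0 < L2" and Q: "\<forall>p\<in>Trip. is_partition T (Q p)"
    and safe: "unsafe_tuples Dist Trip d0 L1 L2 \<eta> Q y = {}"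
    and lipschitz: "\<And>p t1 t2. p \<in> Trip \<Longrightarrow> t1 \<in> {0..T} \<Longrightarrow> t2 \<in> {0..T} \<Longrightarrow>
      \<bar>Dist p t1 y - Dist p t2 y\<bar> \<le> L1 * \<bar>t1 - t2\<bar>"
  shows "strictly_feasible Dist Trip T d0 y"
  unfolding strictly_feasible_def
proof (intro ballI)
  fix p t assume p: "p \<in> Trip" and t: "t \<in> {0..T}"
  have "0 \<le> L1 * T"
    using lipschitz[OF p, of 0 T] \<open>0 < T\<close> by (smt (verit) abs_ge_zero atLeastAtMost_iff)
  then have "0 \<le> L1" using \<open>0 < T\<close> by (simp add: zero_le_mult_iff)
  obtain a b where ab: "(a, b) \<in> intervals (Q p)" "a \<le> t" "t \<le> b"
    using intervals_cover[of "Q p" 0 T t] Q p t \<open>0 < T\<close> by (auto simp: is_partition_def)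
  note I = partition_intervalD[OF Q[rule_format, OF p] ab(1)]
  have "(p, (a, b)) \<notin> unsafe_tuples Dist Trip d0 L1 L2 \<eta> Q y" using safe by simp
  then have "d0 + psi L1 L2 \<eta> (b - a) < Dist p ((a + b) / 2) y"
    using p ab(1) by (simp add: unsafe_tuples_def not_le)
  moreover have "\<bar>Dist p t y - Dist p ((a + b) / 2) y\<bar> \<le> L1 * ((b - a) / 2)"
  proof -
    have "\<bar>t - (a + b) / 2\<bar> \<le> (b - a) / 2" using ab(2,3) by (simp add: abs_le_iff field_simps)
    moreover have "(a + b) / 2 \<in> {0..T}" using I by simp
    ultimately show ?thesis
      using lipschitz[OF p t] \<open>0 \<le> L1\<close> by (meson mult_left_mono order_trans)
  qed
  moreover have "0 < L2 * (b - a) powr \<eta>" using \<open>0 < L2\<close> I by simp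
  ultimately show "d0 < Dist p t y" unfolding psi_def by linarith
qed

lemma strictly_feasible_decomposition:
  assumes "\<forall>i\<in>I. \<forall>t \<theta>. b i t \<theta> = (\<Union>j\<in>J i. bb i j t \<theta>)" "obs = (\<Union>k\<in>K. ok k)"
    and "\<forall>i\<in>I. \<forall>j\<in>J i. \<forall>t \<theta>. bb i j t \<theta> \<noteq> {}" "\<forall>k\<in>K. ok k \<noteq> {}"
    and "\<forall>i\<in>I. \<forall>t\<in>{0..T}. d0 < setdist (b i t \<theta>) obs"
  shows "strictly_feasible (\<lambda>(i, j, k) t \<theta>. setdist (bb i j t \<theta>) (ok k)) (SIGMA i:I. J i \<times> K) T d0 \<theta>"
  unfolding strictly_feasible_def
proof (clarsimp)
  fix i j k t assume "i \<in> I" "j \<in> J i" "k \<in> K" "0 \<le> t" "t \<le> T"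
  with assms have "d0 < setdist (b i t \<theta>) obs" by simp
  also have "\<dots> \<le> setdist (bb i j t \<theta>) obs"
    using assms \<open>i \<in> I\<close> \<open>j \<in> J i\<close> by (intro setdist_subset_left) auto
  also have "\<dots> \<le> setdist (bb i j t \<theta>) (ok k)"
    using assms \<open>k \<in> K\<close> by (intro setdist_subset_right) auto
  finally show "d0 < setdist (bb i j t \<theta>) (ok k)" .
qed

lemma eventually_uniform_margin:
  fixes F :: "real \<Rightarrow> 'a::topological_space \<Rightarrow> real"
  assumes "compact S" and cont: "continuous_on UNIV (\<lambda>(t, y). F t y)" and pos: "\<And>t. t \<in> S \<Longrightarrow> e < F t \<theta>"
  shows "\<forall>\<^sub>F \<delta> in at_right 0. \<forall>\<^sub>F y in nhds \<theta>. \<forall>t\<in>S. e + \<delta> < F t y"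
proof (cases "S = {}")
  case False
  have "continuous_on S (\<lambda>t. (t, \<theta>))" by (intro continuous_intros)
  from continuous_on_compose2[OF cont this] have "continuous_on S (\<lambda>t. F t \<theta>)" by simp
  then obtain t0 where "t0 \<in> S" and t0: "\<And>t. t \<in> S \<Longrightarrow> F t0 \<theta> \<le> F t \<theta>"
    using continuous_attains_inf[OF \<open>compact S\<close> False] by blast
  have "continuous_on UNIV (\<lambda>z::'a \<times> real. (snd z, fst z))" by (intro continuous_intros)
  from continuous_on_compose2[OF cont this] have swap: "continuous_on UNIV (\<lambda>z. F (snd z) (fst z))"
    by (simp add: case_prod_beta)
  have "\<forall>\<^sub>F \<delta> in at_right 0. \<delta> < F t0 \<theta> - e"
    using pos[OF \<open>t0 \<in> S\<close>] by (auto simp: eventually_at_right_field intro!: exI[of _ "F t0 \<theta> - e"])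
  then show ?thesis
  proof eventually_elim
    case (elim \<delta>)
    define W where "W = {z. e + \<delta> < F (snd z) (fst z)}"
    have "open W"
      unfolding W_def by (rule open_Collect_less[OF continuous_on_const swap])
    moreover have "{\<theta>} \<times> S \<subseteq> W"
      using elim t0 by (force simp: W_def)
    ultimately obtain X where "\<theta> \<in> X" "open X" "X \<times> S \<subseteq> W"
      using Elementary_Topology.tube_lemma[OF \<open>compact S\<close> \<open>open W\<close> \<open>{\<theta>} \<times> S \<subseteq> W\<close>] by blast
    moreover from \<open>X \<times> S \<subseteq> W\<close> have "\<forall>y\<in>X. \<forall>t\<in>S. e + \<delta> < F t y"
      unfolding W_def by (auto dest: mem_Times_iff[THEN iffD2, THEN subsetD[rotated]])
    ultimately show ?case
      unfolding eventually_nhds by blast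
  qed
qed simp

lemma strictly_feasible_margin:
  assumes "finite Trip" and cont: "\<And>p. p \<in> Trip \<Longrightarrow> continuous_on UNIV (\<lambda>(t, y). Dist p t y)"
    and "strictly_feasible Dist Trip T d0 \<theta>"
  shows "\<exists>\<delta>>0. \<forall>\<^sub>F y in nhds \<theta>. strictly_feasible Dist Trip T (d0 + \<delta>) y"
proof -
  have "\<forall>\<^sub>F \<delta> in at_right 0. \<forall>p\<in>Trip. \<forall>\<^sub>F y in nhds \<theta>. \<forall>t\<in>{0..T}. d0 + \<delta> < Dist p t y"
    using assms unfolding strictly_feasible_def
    by (intro eventually_ball_finite ballI eventually_uniform_margin) auto
  then have "\<forall>\<^sub>F \<delta> in at_right 0. 0 < \<delta> \<and> (\<forall>p\<in>Trip. \<forall>\<^sub>F y in nhds \<theta>. \<forall>t\<in>{0..T}. d0 + \<delta> < Dist p t y)"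
    using eventually_at_right_less by (rule eventually_conj[rotated])
  then obtain \<delta> where "0 < \<delta>" and margin: "\<forall>p\<in>Trip. \<forall>\<^sub>F y in nhds \<theta>. \<forall>t\<in>{0..T}. d0 + \<delta> < Dist p t y"
    using eventually_happens'[OF trivial_limit_at_right_real] by blast
  have "\<forall>\<^sub>F y in nhds \<theta>. \<forall>p\<in>Trip. \<forall>t\<in>{0..T}. d0 + \<delta> < Dist p t y"
    using eventually_ball_finite[OF \<open>finite Trip\<close> margin] .
  then show ?thesis
    unfolding strictly_feasible_def using \<open>0 < \<delta>\<close> by (intro exI[of _ \<delta>] conjI)
qed

section \<open>Gradient of the penalised energy\<close>

lemma C2_on_imp_C1:
  assumes "C2_on S f"
  obtains f' where "\<And>x. x \<in> S \<Longrightarrow> (f has_derivative blinfun_apply (f' x)) (at x)" "continuous_on S f'"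
proof -
  obtain f' f'' where f': "\<forall>x\<in>S. (f has_derivative blinfun_apply (f' x)) (at x)"
    and f'': "\<forall>x\<in>S. (f' has_derivative blinfun_apply (f'' x)) (at x)"
    using assms unfolding C2_on_def by blast
  have "continuous_on S f'"
    using f'' by (intro continuous_at_imp_continuous_on) (auto dest: has_derivative_continuous)
  with f' that show ?thesis by blast
qed

lemma C2_on_imp_continuous_on:
  assumes "C2_on S f"
  shows "continuous_on S f"
proof -
  obtain f' where "\<And>x. x \<in> S \<Longrightarrow> (f has_derivative blinfun_apply (f' x)) (at x)"
    using C2_on_imp_C1[OF assms] by blast
  then show ?thesis
    by (intro continuous_at_imp_continuous_on) (auto dest: has_derivative_continuous)
qed

lemma has_derivative_penalty:
  fixes D :: "real \<Rightarrow> 'a::real_normed_vector \<Rightarrow> real"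
  assumes "((\<lambda>(t, y). D t y) has_derivative blinfun_apply D') (at (t, \<theta>))"
    and "(Pen has_derivative blinfun_apply P') (at (D t \<theta> - d0))"
  shows "((\<lambda>y. Pen (D t y - d0)) has_derivative (\<lambda>h. P' (D' (0, h)))) (at \<theta>)"
proof -
  have "((\<lambda>y. (t, y)) has_derivative (\<lambda>h. (0, h))) (at \<theta>)"
    by (auto intro!: derivative_eq_intros)
  from has_derivative_compose[OF this assms(1)]
  have "((\<lambda>y. D t y - d0) has_derivative (\<lambda>h. D' (0, h))) (at \<theta>)"
    by (auto intro!: derivative_eq_intros)
  from has_derivative_compose[OF this assms(2)] show ?thesis by simp
qed

lemma penalty_grad_bounded:
  fixes D :: "real \<Rightarrow> real^'n \<Rightarrow> real"
  assumes D': "\<And>z. ((\<lambda>(t, y). D t y) has_derivative blinfun_apply (D' z)) (at z)" "continuous_on UNIV D'"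
    and P': "\<And>x. 0 < x \<Longrightarrow> (Pen has_derivative blinfun_apply (P' x)) (at x)" "continuous_on {0<..} P'"
    and "compact S" and pos: "\<And>t. t \<in> S \<Longrightarrow> d0 < D t \<theta>"
  shows "\<And>t. t \<in> S \<Longrightarrow>
      ((\<lambda>y. Pen (D t y - d0)) has_derivative (\<lambda>h. grad (\<lambda>y. Pen (D t y - d0)) \<theta> \<bullet> h)) (at \<theta>)"
    and "bounded ((\<lambda>t. grad (\<lambda>y. Pen (D t y - d0)) \<theta>) ` S)"
proof -
  have chain: "((\<lambda>y. Pen (D t y - d0)) has_derivative
      (\<lambda>h. P' (D t \<theta> - d0) (D' (t, \<theta>) (0, h)))) (at \<theta>)" if "t \<in> S" for t
    using pos[OF that] by (intro has_derivative_penalty D' P') simp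
  then show "\<And>t. t \<in> S \<Longrightarrow>
      ((\<lambda>y. Pen (D t y - d0)) has_derivative (\<lambda>h. grad (\<lambda>y. Pen (D t y - d0)) \<theta> \<bullet> h)) (at \<theta>)"
    by (rule has_derivative_grad)
  define b where "b t = norm (P' (D t \<theta> - d0)) * norm (D' (t, \<theta>))" for t
  have grad_le: "norm (grad (\<lambda>y. Pen (D t y - d0)) \<theta>) \<le> b t" if "t \<in> S" for t
  proof (rule norm_grad_le[OF chain[OF that]])
    fix h
    have "\<bar>P' (D t \<theta> - d0) (D' (t, \<theta>) (0, h))\<bar> \<le> norm (P' (D t \<theta> - d0)) * norm (D' (t, \<theta>) (0, h))"
      using norm_blinfun by (metis real_norm_def)
    also have "\<dots> \<le> norm (P' (D t \<theta> - d0)) * (norm (D' (t, \<theta>)) * norm h)"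
      using norm_blinfun[of "D' (t, \<theta>)" "(0, h)"] by (intro mult_left_mono) (auto simp: norm_Pair)
    finally show "\<bar>P' (D t \<theta> - d0) (D' (t, \<theta>) (0, h))\<bar> \<le> b t * norm h"
      by (simp add: b_def mult.assoc)
  qed (simp add: b_def)
  have "continuous_on UNIV (\<lambda>(t, y). D t y)"
    using has_derivative_continuous[OF D'(1)] by (simp add: continuous_at_imp_continuous_on)
  from continuous_on_compose2[OF this, of S "\<lambda>t. (t, \<theta>)"]
  have "continuous_on S (\<lambda>t. D t \<theta> - d0)"
    by (simp add: continuous_on_Pair continuous_on_diff)
  then have "continuous_on S (\<lambda>t. P' (D t \<theta> - d0))"
    by (rule continuous_on_compose2[OF P'(2)]) (use pos in auto)
  moreover have "continuous_on S (\<lambda>t. D' (t, \<theta>))"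
    by (rule continuous_on_compose2[OF D'(2)]) (auto intro: continuous_on_Pair continuous_on_id continuous_on_const)
  ultimately have "bounded (b ` S)"
    unfolding b_def using \<open>compact S\<close>
    by (intro compact_imp_bounded compact_continuous_image continuous_on_mult continuous_on_norm)
  then obtain K where "\<And>t. t \<in> S \<Longrightarrow> b t \<le> K"
    unfolding bounded_iff by (auto simp: abs_le_iff)
  with grad_le show "bounded ((\<lambda>t. grad (\<lambda>y. Pen (D t y - d0)) \<theta>) ` S)"
    unfolding bounded_iff by (auto intro!: exI[of _ K] intro: order_trans)
qed

lemma energy_has_derivative:
  fixes Obj :: "real^'n \<Rightarrow> real" and Dist :: "'p \<Rightarrow> real \<Rightarrow> real^'n \<Rightarrow> real"
    and G :: "'p \<Rightarrow> real \<Rightarrow> real^'n"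
  assumes Q: "\<forall>p\<in>Trip. is_partition T (Q p)" and "Obj differentiable (at \<theta>)"
    and penalty: "\<And>p t. p \<in> Trip \<Longrightarrow> t \<in> {0..T} \<Longrightarrow>
      ((\<lambda>y. Pen (Dist p t y - d0)) has_derivative (\<lambda>h. G p t \<bullet> h)) (at \<theta>)"
  shows "(energy Obj Pen Dist Trip d0 \<mu> Q has_derivative (\<lambda>h. (grad Obj \<theta> +
      \<mu> *\<^sub>R (\<Sum>p\<in>Trip. \<Sum>(a, b)\<in>intervals (Q p). (b - a) *\<^sub>R G p ((a + b) / 2))) \<bullet> h)) (at \<theta>)"
proof -
  have "(a + b) / 2 \<in> {0..T}" if "p \<in> Trip" "(a, b) \<in> intervals (Q p)" for p a b
    using partition_intervalD[OF Q[rule_format] that(2)] that(1) by auto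
  then have "((\<lambda>y. \<Sum>p\<in>Trip. \<Sum>(a, b)\<in>intervals (Q p). (b - a) * Pen (Dist p ((a + b) / 2) y - d0))
      has_derivative (\<lambda>h. (\<Sum>p\<in>Trip. \<Sum>(a, b)\<in>intervals (Q p). (b - a) *\<^sub>R G p ((a + b) / 2)) \<bullet> h)) (at \<theta>)"
    unfolding inner_sum_left
    by (intro has_derivative_sum) (auto simp: split_beta intro!: has_derivative_mult_right penalty)
  moreover obtain O' where "(Obj has_derivative O') (at \<theta>)"
    using assms(2) by (auto simp: differentiable_def)
  ultimately show ?thesis
    unfolding energy_def inner_add_left inner_scaleR_left
    by (intro has_derivative_add has_derivative_mult_right has_derivative_grad)
qed

lemma norm_midpoint_sum_le:
  fixes G :: "'p \<Rightarrow> real \<Rightarrow> 'a::real_normed_vector"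
  assumes Q: "\<forall>p\<in>Trip. is_partition T (Q p)"
    and bound: "\<And>p t. p \<in> Trip \<Longrightarrow> t \<in> {0..T} \<Longrightarrow> norm (G p t) \<le> C"
  shows "norm (\<Sum>p\<in>Trip. \<Sum>(a, b)\<in>intervals (Q p). (b - a) *\<^sub>R G p ((a + b) / 2))
    \<le> real (card Trip) * (T * C)"
proof -
  have "norm ((b - a) *\<^sub>R G p ((a + b) / 2)) \<le> (b - a) * C"
    if "p \<in> Trip" "(a, b) \<in> intervals (Q p)" for p a b
    using partition_intervalD[OF Q[rule_format, OF that(1)] that(2)] bound[OF that(1)]
    by (simp add: mult_left_mono)
  then have "norm (\<Sum>p\<in>Trip. \<Sum>(a, b)\<in>intervals (Q p). (b - a) *\<^sub>R G p ((a + b) / 2))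
      \<le> (\<Sum>p\<in>Trip. \<Sum>(a, b)\<in>intervals (Q p). (b - a) * C)"
    by (intro order_trans[OF norm_sum] sum_mono) (auto simp: split_beta intro!: order_trans[OF norm_sum] sum_mono)
  also have "\<dots> = (\<Sum>p\<in>Trip. T * C)"
  proof (rule sum.cong[OF refl])
    fix p assume "p \<in> Trip"
    have "(\<Sum>(a, b)\<in>intervals (Q p). (b - a) * C) = (\<Sum>(a, b)\<in>intervals (Q p). b - a) * C"
      by (simp add: sum_distrib_right split_beta)
    then show "(\<Sum>(a, b)\<in>intervals (Q p). (b - a) * C) = T * C"
      using partition_interval_lengths Q \<open>p \<in> Trip\<close> by simp
  qed
  finally show ?thesis by simp
qed

lemma penalty_grad_uniformly_bounded:
  fixes Dist :: "'p \<Rightarrow> real \<Rightarrow> real^'n \<Rightarrow> real"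
  assumes "finite Trip" and Dist_C2: "\<And>p. p \<in> Trip \<Longrightarrow> C2_on UNIV (\<lambda>(t, y). Dist p t y)"
    and "C2_on {0<..} Pen" and feasible: "strictly_feasible Dist Trip T d0 \<theta>"
  obtains C where "\<And>p t. p \<in> Trip \<Longrightarrow> t \<in> {0..T} \<Longrightarrow> ((\<lambda>y. Pen (Dist p t y - d0)) has_derivative
      (\<lambda>h. grad (\<lambda>y. Pen (Dist p t y - d0)) \<theta> \<bullet> h)) (at \<theta>)"
    and "\<And>p t. p \<in> Trip \<Longrightarrow> t \<in> {0..T} \<Longrightarrow> norm (grad (\<lambda>y. Pen (Dist p t y - d0)) \<theta>) \<le> C"
proof -
  obtain P' where P': "\<And>x. 0 < x \<Longrightarrow> (Pen has_derivative blinfun_apply (P' x)) (at x)" "continuous_on {0<..} P'"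
    using C2_on_imp_C1[OF \<open>C2_on {0<..} Pen\<close>] by auto
  define G where "G p t = grad (\<lambda>y. Pen (Dist p t y - d0)) \<theta>" for p t
  have penalty: "\<And>t. t \<in> {0..T} \<Longrightarrow> ((\<lambda>y. Pen (Dist p t y - d0)) has_derivative (\<lambda>h. G p t \<bullet> h)) (at \<theta>)"
    and bounded_G: "bounded (G p ` {0..T})" if p: "p \<in> Trip" for p
  proof -
    obtain D' where D': "\<And>z. ((\<lambda>(t, y). Dist p t y) has_derivative blinfun_apply (D' z)) (at z)"
      "continuous_on UNIV D'"
      using C2_on_imp_C1[OF Dist_C2[OF p]] by auto
    have "\<And>t. t \<in> {0..T} \<Longrightarrow> d0 < Dist p t \<theta>"
      using feasible p by (simp add: strictly_feasible_def)
    note pg = penalty_grad_bounded[OF D' P' compact_Icc this]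
    show "\<And>t. t \<in> {0..T} \<Longrightarrow> ((\<lambda>y. Pen (Dist p t y - d0)) has_derivative (\<lambda>h. G p t \<bullet> h)) (at \<theta>)"
      using pg(1) by (simp add: G_def)
    show "bounded (G p ` {0..T})"
      using pg(2) by (simp add: G_def)
  qed
  have "bounded (\<Union>p\<in>Trip. G p ` {0..T})"
    using \<open>finite Trip\<close> bounded_G by (intro bounded_UN) auto
  then obtain C where "\<And>p t. p \<in> Trip \<Longrightarrow> t \<in> {0..T} \<Longrightarrow> norm (G p t) \<le> C"
    unfolding bounded_iff by blast
  with penalty that show ?thesis unfolding G_def by blast
qed

lemma energy_grad_uniformly_bounded:
  fixes Obj :: "real^'n \<Rightarrow> real" and Dist :: "'p \<Rightarrow> real \<Rightarrow> real^'n \<Rightarrow> real"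
  assumes "finite Trip" and Dist_C2: "\<And>p. p \<in> Trip \<Longrightarrow> C2_on UNIV (\<lambda>(t, y). Dist p t y)"
    and "C2_on {0<..} Pen" and "twice_differentiable_on UNIV Obj"
    and feasible: "strictly_feasible Dist Trip T d0 \<theta>"
  shows "\<exists>K. \<forall>Q. (\<forall>p\<in>Trip. is_partition T (Q p)) \<longrightarrow> energy Obj Pen Dist Trip d0 \<mu> Q differentiable (at \<theta>)
      \<and> norm (grad (energy Obj Pen Dist Trip d0 \<mu> Q) \<theta>) \<le> K"
proof -
  define G where "G p t = grad (\<lambda>y. Pen (Dist p t y - d0)) \<theta>" for p t
  obtain C where penalty: "\<And>p t. p \<in> Trip \<Longrightarrow> t \<in> {0..T} \<Longrightarrow>
      ((\<lambda>y. Pen (Dist p t y - d0)) has_derivative (\<lambda>h. G p t \<bullet> h)) (at \<theta>)"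
    and C: "\<And>p t. p \<in> Trip \<Longrightarrow> t \<in> {0..T} \<Longrightarrow> norm (G p t) \<le> C"
    unfolding G_def using penalty_grad_uniformly_bounded[OF assms(1-3) feasible] by blast
  have "Obj differentiable (at \<theta>)"
    using \<open>twice_differentiable_on UNIV Obj\<close> by (auto simp: twice_differentiable_on_def differentiable_def)
  show ?thesis
  proof (intro exI allI impI conjI)
    fix Q assume Q: "\<forall>p\<in>Trip. is_partition T (Q p)"
    note deriv = energy_has_derivative[where \<mu> = \<mu> and Dist = Dist and G = G, OF Q \<open>Obj differentiable (at \<theta>)\<close> penalty]
    then show "energy Obj Pen Dist Trip d0 \<mu> Q differentiable (at \<theta>)"
      by (auto simp: differentiable_def)
    have "norm (\<Sum>p\<in>Trip. \<Sum>(a, b)\<in>intervals (Q p). (b - a) *\<^sub>R G p ((a + b) / 2))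
        \<le> real (card Trip) * (T * C)"
      using Q C by (rule norm_midpoint_sum_le)
    with grad_eqI[OF deriv]
    show "norm (grad (energy Obj Pen Dist Trip d0 \<mu> Q) \<theta>) \<le> norm (grad Obj \<theta>) + \<bar>\<mu>\<bar> * (real (card Trip) * (T * C))"
      by (auto intro!: order_trans[OF norm_triangle_ineq] mult_left_mono)
  qed
qed

section \<open>Line-Search\<close>

lemma ls_stepE:
  assumes "ls_step Obj Pen Dist Trip d0 L1 L2 \<eta> M c \<gamma> \<mu> \<theta> (Q, \<epsilon>, \<alpha>, d) sub (Q', \<epsilon>', \<alpha>', d')"
  obtains (subdivision) p a b where "sub" "(p, (a, b)) \<in> unsafe_tuples Dist Trip d0 L1 L2 \<eta> Q (\<theta> + \<alpha> *\<^sub>R d)"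
      "\<alpha> \<le> \<epsilon>" "Q' = subdivide Q (p, (a, b))" "\<epsilon>' = \<gamma> * \<epsilon>" "\<alpha>' = \<alpha>"
      "d' \<in> directions M (energy Obj Pen Dist Trip d0 \<mu> Q') \<theta>"
  | (backtrack) "\<not> sub" "Q' = Q" "\<epsilon>' = \<epsilon>" "\<alpha>' = \<gamma> * \<alpha>" "d' = d"
      "unsafe_tuples Dist Trip d0 L1 L2 \<eta> Q (\<theta> + \<alpha> *\<^sub>R d) \<noteq> {} \<Longrightarrow> \<epsilon> < \<alpha>"
      "unsafe_tuples Dist Trip d0 L1 L2 \<eta> Q (\<theta> + \<alpha> *\<^sub>R d) = {} \<Longrightarrow>
        \<not> wolfe (energy Obj Pen Dist Trip d0 \<mu> Q) c \<theta> d \<alpha>"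
  using assms unfolding ls_step_def ls_continue_def by (auto simp: not_le)

lemma ls_step_invariant:
  assumes step: "ls_step Obj Pen Dist Trip d0 L1 L2 \<eta> M c \<gamma> \<mu> \<theta> (Q, \<epsilon>, \<alpha>, d) sub (Q', \<epsilon>', \<alpha>', d')"
    and "\<forall>p\<in>Trip. is_partition T (Q p)" "0 < \<epsilon>" "0 < \<gamma>"
    and "d \<in> directions M (energy Obj Pen Dist Trip d0 \<mu> Q) \<theta>"
  shows "(\<forall>p\<in>Trip. is_partition T (Q' p)) \<and> 0 < \<epsilon>' \<and> d' \<in> directions M (energy Obj Pen Dist Trip d0 \<mu> Q') \<theta>"
  using step
proof (cases rule: ls_stepE)
  case (subdivision p a b)
  then have "p \<in> Trip" "(a, b) \<in> intervals (Q p)" by (auto simp: unsafe_tuples_def)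
  with subdivision assms(2-4) show ?thesis by (simp add: is_partition_subdivide)
next
  case backtrack
  with assms(2,3,5) show ?thesis by simp
qed

lemma ls_reachable_invariant:
  assumes "(\<lambda>s s'. \<exists>sub. ls_step Obj Pen Dist Trip d0 L1 L2 \<eta> M c \<gamma> \<mu> \<theta> s sub s')\<^sup>*\<^sup>*
      (Q, \<epsilon>, \<alpha>, d) (Q', \<epsilon>', \<alpha>', d')"
    and "\<forall>p\<in>Trip. is_partition T (Q p)" "0 < \<epsilon>" "0 < \<gamma>"
    and "d \<in> directions M (energy Obj Pen Dist Trip d0 \<mu> Q) \<theta>"
  shows "(\<forall>p\<in>Trip. is_partition T (Q' p)) \<and> 0 < \<epsilon>' \<and> d' \<in> directions M (energy Obj Pen Dist Trip d0 \<mu> Q') \<theta>"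
proof -
  have "case s' of (Q', \<epsilon>', \<alpha>', d') \<Rightarrow> (\<forall>p\<in>Trip. is_partition T (Q' p)) \<and> 0 < \<epsilon>' \<and>
      d' \<in> directions M (energy Obj Pen Dist Trip d0 \<mu> Q') \<theta>"
    if "(\<lambda>s s'. \<exists>sub. ls_step Obj Pen Dist Trip d0 L1 L2 \<eta> M c \<gamma> \<mu> \<theta> s sub s')\<^sup>*\<^sup>* (Q, \<epsilon>, \<alpha>, d) s'" for s'
    using that
  proof (induction rule: rtranclp_induct)
    case (step s1 s2)
    obtain Q1 \<epsilon>1 \<alpha>1 d1 Q2 \<epsilon>2 \<alpha>2 d2 where "s1 = (Q1, \<epsilon>1, \<alpha>1, d1)" "s2 = (Q2, \<epsilon>2, \<alpha>2, d2)"
      by (cases s1, cases s2) auto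
    with step ls_step_invariant[of Obj Pen Dist Trip d0 L1 L2 \<eta> M c \<gamma> \<mu> \<theta> Q1 \<epsilon>1 \<alpha>1 d1]
    show ?case using assms(4) by auto
  qed (use assms(2,3,5) in simp)
  from this[OF assms(1)] show ?thesis by simp
qed

lemma infinite_nat_card_less:
  assumes "infinite {n::nat. P n}"
  shows "\<exists>n. P n \<and> K \<le> card {j. j < n \<and> P j}"
proof -
  obtain F where F: "F \<subseteq> {n. P n}" "finite F" "card F = Suc K"
    using infinite_arbitrarily_large[OF assms] by blast
  define n where "n = Max F"
  have "F \<noteq> {}" using F(3) by auto
  then have "n \<in> F" unfolding n_def using F(2) by simp
  have "F - {n} \<subseteq> {j. j < n \<and> P j}"
  proof
    fix j assume "j \<in> F - {n}"
    then have "j \<le> n" "j \<noteq> n" "P j" using F Max_ge[OF F(2)] by (auto simp: n_def)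
    then show "j \<in> {j. j < n \<and> P j}" by simp
  qed
  then have "card (F - {n}) \<le> card {j. j < n \<and> P j}"
    by (rule card_mono[rotated]) simp
  with F \<open>n \<in> F\<close> show ?thesis by auto
qed

locale line_search_run =
  fixes Obj :: "real^'n \<Rightarrow> real" and Pen :: "real \<Rightarrow> real" and Dist :: "'p \<Rightarrow> real \<Rightarrow> real^'n \<Rightarrow> real"
    and Trip :: "'p set" and T d0 L1 L2 \<eta> c \<gamma> \<mu> :: real and M :: "real^'n^'n \<Rightarrow> real^'n^'n"
    and \<theta> :: "real^'n" and Q :: "nat \<Rightarrow> 'p partition_state" and \<epsilon> \<alpha> :: "nat \<Rightarrow> real"
    and d :: "nat \<Rightarrow> real^'n" and sub :: "nat \<Rightarrow> bool"
  assumes step: "\<And>n. ls_step Obj Pen Dist Trip d0 L1 L2 \<eta> M c \<gamma> \<mu> \<theta> (Q n, \<epsilon> n, \<alpha> n, d n) (sub n)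
      (Q (Suc n), \<epsilon> (Suc n), \<alpha> (Suc n), d (Suc n))"
    and gamma: "0 < \<gamma>" "\<gamma> < 1"
    and start: "\<forall>p\<in>Trip. is_partition T (Q 0 p)" "0 < \<epsilon> 0" "0 < \<alpha> 0"
      "d 0 \<in> directions M (energy Obj Pen Dist Trip d0 \<mu> (Q 0)) \<theta>"
begin

lemma run_invariant:
  "(\<forall>p\<in>Trip. is_partition T (Q n p)) \<and> 0 < \<epsilon> n \<and> 0 < \<alpha> n \<and>
    d n \<in> directions M (energy Obj Pen Dist Trip d0 \<mu> (Q n)) \<theta>"
proof (induction n)
  case (Suc n)
  have "0 < \<alpha> (Suc n)"
    using step[of n] Suc gamma by (cases rule: ls_stepE) auto
  with Suc ls_step_invariant[OF step[of n]] gamma show ?case by blast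
qed (use start in simp)

lemma eps_eq: "\<epsilon> n = \<epsilon> 0 * \<gamma> ^ card {j. j < n \<and> sub j}"
proof (induction n)
  case (Suc n)
  have "{j. j < Suc n \<and> sub j} = (if sub n then insert n {j. j < n \<and> sub j} else {j. j < n \<and> sub j})"
    by (auto simp: less_Suc_eq)
  with step[of n] Suc show ?case by (cases rule: ls_stepE) auto
qed simp

lemma alpha_decseq: "decseq \<alpha>"
proof (rule decseq_SucI)
  fix n show "\<alpha> (Suc n) \<le> \<alpha> n"
    using step[of n] run_invariant[of n] gamma by (cases rule: ls_stepE) (auto simp: mult_le_cancel_right1)
qed

lemma alpha_le_eps: "sub n \<Longrightarrow> \<alpha> n \<le> \<epsilon> n"
  using step[of n] by (cases rule: ls_stepE) auto

lemma infinitely_many_subdivisions: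
  assumes diff: "\<And>R. \<forall>p\<in>Trip. is_partition T (R p) \<Longrightarrow> energy Obj Pen Dist Trip d0 \<mu> R differentiable (at \<theta>)"
    and coercive: "\<And>H x. \<beta> * (x \<bullet> x) \<le> x \<bullet> (M H *v x)" and "0 < \<beta>" "c < 1"
  shows "infinite {n. sub n}"
proof
  assume "finite {n. sub n}"
  then obtain N where N: "\<And>n. N \<le> n \<Longrightarrow> \<not> sub n"
    by (metis finite_nat_set_iff_bounded_le mem_Collect_eq not_less_eq_eq)
  define E where "E = energy Obj Pen Dist Trip d0 \<mu> (Q N)"
  have tail: "Q (N + k) = Q N \<and> \<epsilon> (N + k) = \<epsilon> N \<and> d (N + k) = d N \<and> \<alpha> (N + k) = \<gamma> ^ k * \<alpha> N" for k
  proof (induction k)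
    case (Suc k)
    from step[of "N + k"] show ?case
      by (cases rule: ls_stepE) (use N[of "N + k"] Suc in auto)
  qed simp
  have "d N \<bullet> grad E \<theta> < 0" if "d N \<noteq> 0"
    using direction_descent[of \<beta> M, OF coercive \<open>0 < \<beta>\<close> _ that] run_invariant[of N] unfolding E_def by blast
  then have "\<forall>\<^sub>F a in at_right 0. wolfe E c \<theta> (d N) a"
    using wolfe_eventually diff run_invariant[of N] \<open>c < 1\<close> unfolding E_def by blast
  moreover have "\<forall>\<^sub>F a in at_right 0. a \<le> \<epsilon> N"
    using run_invariant[of N] by (auto simp: eventually_at_right_field intro!: exI[of _ "\<epsilon> N"])
  ultimately have "\<forall>\<^sub>F a in at_right 0. wolfe E c \<theta> (d N) a \<and> a \<le> \<epsilon> N"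
    by eventually_elim simp
  then obtain b where "0 < b" and small: "\<And>a. 0 < a \<Longrightarrow> a < b \<Longrightarrow> wolfe E c \<theta> (d N) a \<and> a \<le> \<epsilon> N"
    unfolding eventually_at_right_field by blast
  obtain k where "\<gamma> ^ k < b / \<alpha> N"
    using real_arch_pow_inv[of "b / \<alpha> N" \<gamma>] \<open>0 < b\<close> run_invariant[of N] gamma by auto
  then have "\<gamma> ^ k * \<alpha> N < b" using run_invariant[of N] by (simp add: pos_less_divide_eq)
  then have "wolfe E c \<theta> (d N) (\<alpha> (N + k)) \<and> \<alpha> (N + k) \<le> \<epsilon> (N + k)"
    using small[of "\<gamma> ^ k * \<alpha> N"] tail[of k] run_invariant[of N] gamma by simp
  with step[of "N + k"] show False
    by (cases rule: ls_stepE) (use N[of "N + k"] tail[of k] E_def in auto)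
qed

lemma alpha_tendsto_zero:
  assumes "infinite {n. sub n}"
  shows "\<alpha> \<longlonglongrightarrow> 0"
proof (rule order_tendstoI)
  fix e :: real assume "0 < e"
  obtain K where "\<gamma> ^ K < e / \<epsilon> 0"
    using real_arch_pow_inv[of "e / \<epsilon> 0" \<gamma>] \<open>0 < e\<close> start(2) gamma by auto
  then have K: "\<epsilon> 0 * \<gamma> ^ K < e" using start(2) by (simp add: pos_less_divide_eq mult.commute)
  obtain n where "sub n" "K \<le> card {j. j < n \<and> sub j}"
    using infinite_nat_card_less[OF assms] by blast
  then have "\<gamma> ^ card {j. j < n \<and> sub j} \<le> \<gamma> ^ K"
    using gamma by (simp add: power_decreasing)
  then have "\<epsilon> n \<le> \<epsilon> 0 * \<gamma> ^ K"
    unfolding eps_eq[of n] using start(2) by (simp add: mult_left_mono)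
  then have "\<alpha> n < e"
    using alpha_le_eps[OF \<open>sub n\<close>] K by linarith
  show "\<forall>\<^sub>F m in sequentially. \<alpha> m < e"
  proof (rule eventually_sequentiallyI)
    fix m assume "n \<le> m"
    with alpha_decseq have "\<alpha> m \<le> \<alpha> n" by (rule decseqD)
    with \<open>\<alpha> n < e\<close> show "\<alpha> m < e" by simp
  qed
next
  fix e :: real assume "e < 0"
  show "\<forall>\<^sub>F m in sequentially. e < \<alpha> m"
  proof (intro always_eventually allI)
    fix m show "e < \<alpha> m" using run_invariant[of m] \<open>e < 0\<close> by linarith
  qed
qed

lemma directions_bounded:
  assumes "\<And>R. \<forall>p\<in>Trip. is_partition T (R p) \<Longrightarrow> norm (grad (energy Obj Pen Dist Trip d0 \<mu> R) \<theta>) \<le> K"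
    and coercive: "\<And>H x. \<beta> * (x \<bullet> x) \<le> x \<bullet> (M H *v x)" and "0 < \<beta>"
  shows "bounded (range d)"
proof -
  have "norm (d n) \<le> (1 + 1 / \<beta>) * K" for n
  proof -
    have "norm (d n) \<le> (1 + 1 / \<beta>) * norm (grad (energy Obj Pen Dist Trip d0 \<mu> (Q n)) \<theta>)"
      using norm_direction_le[of \<beta> M, OF coercive \<open>0 < \<beta>\<close>] run_invariant[of n] by blast
    also have "\<dots> \<le> (1 + 1 / \<beta>) * K"
      using assms(1) run_invariant[of n] \<open>0 < \<beta>\<close> by (intro mult_left_mono) auto
    finally show ?thesis .
  qed
  then show ?thesis unfolding bounded_iff by blast
qed

lemma trial_points_tendsto:
  assumes "infinite {n. sub n}" "bounded (range d)"
  shows "(\<lambda>n. \<theta> + \<alpha> n *\<^sub>R d n) \<longlonglongrightarrow> \<theta>"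
proof -
  obtain B where "\<And>n. norm (d n) \<le> B"
    using assms(2) by (meson bounded_iff rangeI)
  then have "(\<lambda>n. \<alpha> n *\<^sub>R d n) \<longlonglongrightarrow> 0"
    by (intro lim_null_scaleR_bounded[OF alpha_tendsto_zero[OF assms(1)]] always_eventually) blast
  from tendsto_add[OF tendsto_const[of \<theta>] this] show ?thesis by simp
qed

lemma potential_step:
  assumes "finite Trip" "0 < h" and short: "\<And>x. 0 < x \<Longrightarrow> x < h \<Longrightarrow> psi L1 L2 \<eta> x < \<delta>"
    and margin: "strictly_feasible Dist Trip T (d0 + \<delta>) (\<theta> + \<alpha> n *\<^sub>R d n)"
  shows "subdivision_potential h Trip (Q (Suc n)) + (if sub n then 1 else 0) = subdivision_potential h Trip (Q n)"
  using step[of n]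
proof (cases rule: ls_stepE)
  case (subdivision p a b)
  then have p: "p \<in> Trip" "(a, b) \<in> intervals (Q n p)"
    and unsafe: "Dist p ((a + b) / 2) (\<theta> + \<alpha> n *\<^sub>R d n) \<le> d0 + psi L1 L2 \<eta> (b - a)"
    by (auto simp: unsafe_tuples_def)
  have part: "is_partition T (Q n p)" using run_invariant[of n] p(1) by blast
  note I = partition_intervalD[OF part p(2)]
  have "d0 + \<delta> < Dist p ((a + b) / 2) (\<theta> + \<alpha> n *\<^sub>R d n)"
    using margin p(1) I unfolding strictly_feasible_def by simp
  with unsafe have "\<delta> < psi L1 L2 \<eta> (b - a)" by linarith
  have "h \<le> b - a"
  proof (rule ccontr)
    assume "\<not> h \<le> b - a"
    with short[of "b - a"] I(2) \<open>\<delta> < psi L1 L2 \<eta> (b - a)\<close> show False by simp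
  qed
  moreover have "finite (Q n p)" using part by (simp add: is_partition_def)
  ultimately show ?thesis
    using subdivision_potential_subdivide[where Q = "Q n", OF \<open>finite Trip\<close> p(1) \<open>finite (Q n p)\<close> p(2) \<open>0 < h\<close>]
      subdivision by simp
qed simp

lemma finitely_many_subdivisions:
  assumes "finite Trip" "0 < \<eta>" "bounded (range d)" "0 < \<delta>"
    and margin: "\<forall>\<^sub>F y in nhds \<theta>. strictly_feasible Dist Trip T (d0 + \<delta>) y"
  shows "finite {n. sub n}"
proof (rule ccontr)
  assume inf: "infinite {n. sub n}"
  have "\<forall>\<^sub>F x in at_right 0. psi L1 L2 \<eta> x < \<delta>"
    using order_tendstoD(2)[OF psi_tendsto_zero[OF \<open>0 < \<eta>\<close>] \<open>0 < \<delta>\<close>] .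
  then obtain h where "0 < h" and short: "\<And>x. 0 < x \<Longrightarrow> x < h \<Longrightarrow> psi L1 L2 \<eta> x < \<delta>"
    unfolding eventually_at_right_field by blast
  have "\<forall>\<^sub>F n in sequentially. strictly_feasible Dist Trip T (d0 + \<delta>) (\<theta> + \<alpha> n *\<^sub>R d n)"
    using filterlim_iff[THEN iffD1, OF trial_points_tendsto[OF inf assms(3)]] margin by blast
  then have "\<forall>\<^sub>F n in sequentially. subdivision_potential h Trip (Q (Suc n)) + (if sub n then 1 else 0)
      \<le> subdivision_potential h Trip (Q n)"
    by eventually_elim (simp add: potential_step[OF \<open>finite Trip\<close> \<open>0 < h\<close> short])
  with subdivision_potential_nonneg have "finite {n. sub n}"
    by (rule finite_if_potential_decreases)
  with inf show False by contradiction
qed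

end

lemma line_search_terminates:
  fixes Obj :: "real^'n \<Rightarrow> real" and Dist :: "'p \<Rightarrow> real \<Rightarrow> real^'n \<Rightarrow> real"
    and M :: "real^'n^'n \<Rightarrow> real^'n^'n"
  assumes "finite Trip" "0 < \<eta>" "c < 1" "0 < \<gamma>" "\<gamma> < 1"
    and Dist_C2: "\<And>p. p \<in> Trip \<Longrightarrow> C2_on UNIV (\<lambda>(t, y). Dist p t y)"
    and "C2_on {0<..} Pen" "twice_differentiable_on UNIV Obj"
    and coercive: "\<And>H x. \<beta> * (x \<bullet> x) \<le> x \<bullet> (M H *v x)" and "0 < \<beta>"
    and feasible: "strictly_feasible Dist Trip T d0 \<theta>"
    and start: "\<forall>p\<in>Trip. is_partition T (Q p)" "0 < \<epsilon>" "0 < \<alpha>"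
      "d \<in> directions M (energy Obj Pen Dist Trip d0 \<mu> Q) \<theta>"
  shows "\<nexists>s sub. s 0 = (Q, \<epsilon>, \<alpha>, d) \<and>
      (\<forall>n. ls_step Obj Pen Dist Trip d0 L1 L2 \<eta> M c \<gamma> \<mu> \<theta> (s n) (sub n) (s (Suc n)))"
proof
  assume "\<exists>s sub. s 0 = (Q, \<epsilon>, \<alpha>, d) \<and>
      (\<forall>n. ls_step Obj Pen Dist Trip d0 L1 L2 \<eta> M c \<gamma> \<mu> \<theta> (s n) (sub n) (s (Suc n)))"
  then obtain s sub where "s 0 = (Q, \<epsilon>, \<alpha>, d)"
    and "\<And>n. ls_step Obj Pen Dist Trip d0 L1 L2 \<eta> M c \<gamma> \<mu> \<theta> (s n) (sub n) (s (Suc n))"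
    by blast
  then interpret run: line_search_run Obj Pen Dist Trip T d0 L1 L2 \<eta> c \<gamma> \<mu> M \<theta>
      "\<lambda>n. fst (s n)" "\<lambda>n. fst (snd (s n))" "\<lambda>n. fst (snd (snd (s n)))" "\<lambda>n. snd (snd (snd (s n)))" sub
    using assms by unfold_locales simp_all
  obtain K where K: "\<And>R. \<forall>p\<in>Trip. is_partition T (R p) \<Longrightarrow>
      energy Obj Pen Dist Trip d0 \<mu> R differentiable (at \<theta>) \<and> norm (grad (energy Obj Pen Dist Trip d0 \<mu> R) \<theta>) \<le> K"
    using energy_grad_uniformly_bounded[OF assms(1,6-8) feasible] by blast
  obtain \<delta> where "0 < \<delta>" "\<forall>\<^sub>F y in nhds \<theta>. strictly_feasible Dist Trip T (d0 + \<delta>) y"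
    using strictly_feasible_margin[OF \<open>finite Trip\<close> C2_on_imp_continuous_on[OF Dist_C2] feasible] by blast
  with run.directions_bounded[OF _ coercive \<open>0 < \<beta>\<close>] K assms(1,2)
  have "finite {n. sub n}" by (blast intro: run.finitely_many_subdivisions)
  moreover have "infinite {n. sub n}"
    using run.infinitely_many_subdivisions[OF _ coercive \<open>0 < \<beta>\<close> \<open>c < 1\<close>] K by blast
  ultimately show False by contradiction
qed

lemma alg_reach_invariant:
  assumes "alg_reach Obj Pen Dist Trip d0 L1 L2 \<eta> M c \<gamma>ls \<alpha>0 \<gamma> \<epsilon>d \<epsilon>\<mu> \<theta>0 \<mu>0 Q0 \<epsilon>\<alpha>0 st"
    and "0 < T" "0 < L2" "0 < \<gamma>ls"
    and lipschitz: "\<And>p y t1 t2. p \<in> Trip \<Longrightarrow> t1 \<in> {0..T} \<Longrightarrow> t2 \<in> {0..T} \<Longrightarrow>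
      \<bar>Dist p t1 y - Dist p t2 y\<bar> \<le> L1 * \<bar>t1 - t2\<bar>"
    and "strictly_feasible Dist Trip T d0 \<theta>0" "\<forall>p\<in>Trip. is_partition T (Q0 p)" "0 < \<epsilon>\<alpha>0"
  shows "case st of
      Outer \<theta> \<mu> Q \<epsilon> \<Rightarrow> (\<forall>p\<in>Trip. is_partition T (Q p)) \<and> strictly_feasible Dist Trip T d0 \<theta> \<and> 0 < \<epsilon>
    | Inner \<theta> \<mu> Q \<epsilon> d \<Rightarrow> (\<forall>p\<in>Trip. is_partition T (Q p)) \<and> strictly_feasible Dist Trip T d0 \<theta> \<and> 0 < \<epsilon>
        \<and> d \<in> directions M (energy Obj Pen Dist Trip d0 \<mu> Q) \<theta>"
  using assms(1)
proof (induction rule: alg_reach.induct)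
  case (inner_step \<theta> \<mu> Q \<epsilon> d Q' \<epsilon>' \<alpha> d' d'')
  then have "\<forall>p\<in>Trip. is_partition T (Q p)" "0 < \<epsilon>" "d \<in> directions M (energy Obj Pen Dist Trip d0 \<mu> Q) \<theta>"
    by simp_all
  from ls_reachable_invariant[OF inner_step.hyps(3) this(1,2) \<open>0 < \<gamma>ls\<close> this(3)]
  have "(\<forall>p\<in>Trip. is_partition T (Q' p)) \<and> 0 < \<epsilon>'" by simp
  moreover have "unsafe_tuples Dist Trip d0 L1 L2 \<eta> Q' (\<theta> + \<alpha> *\<^sub>R d') = {}"
    using inner_step.hyps(4) by (simp add: ls_continue_def)
  ultimately have "strictly_feasible Dist Trip T d0 (\<theta> + \<alpha> *\<^sub>R d')"
    using safe_imp_strictly_feasible[OF \<open>0 < T\<close> \<open>0 < L2\<close>] lipschitz by blast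
  with \<open>(\<forall>p\<in>Trip. is_partition T (Q' p)) \<and> 0 < \<epsilon>'\<close> inner_step.hyps(5) show ?case by simp
qed (use assms(6-) in simp_all)

theorem corollary1:
  fixes T d0 L1 L2 \<eta> c \<gamma>ls \<alpha>0 \<gamma> \<epsilon>d \<epsilon>\<mu> \<mu>0 \<epsilon>\<alpha>0 \<beta>l \<beta>u :: real
    and I :: "'i set" and J :: "'i \<Rightarrow> 'j set" and K :: "'k set"
    and b :: "'i \<Rightarrow> real \<Rightarrow> real^'n \<Rightarrow> (real^3) set"
    and bb :: "'i \<Rightarrow> 'j \<Rightarrow> real \<Rightarrow> real^'n \<Rightarrow> (real^3) set"
    and obs :: "(real^3) set" and ok :: "'k \<Rightarrow> (real^3) set"
    and Obj :: "real^'n \<Rightarrow> real" and Pen :: "real \<Rightarrow> real"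
    and M :: "real^'n^'n \<Rightarrow> real^'n^'n"
    and \<theta>0 :: "real^'n" and Q0 :: "('i \<times> 'j \<times> 'k) partition_state"
    and \<theta> :: "real^'n" and \<mu> \<epsilon> :: real and Q :: "('i \<times> 'j \<times> 'k) partition_state"
    and d :: "real^'n"
  defines "Dist \<equiv> (\<lambda>(i,j,k) t \<theta>. setdist (bb i j t \<theta>) (ok k))"
    and "Trip \<equiv> (SIGMA i:I. J i \<times> K)"
  assumes T_pos: "T > 0"
    and fin: "finite I" "\<forall>i\<in>I. finite (J i)" "finite K"
    \<comment> \<open>Assumption 1\<close>
    and decomp_b: "\<forall>i\<in>I. \<forall>t \<theta>. b i t \<theta> = (\<Union>j\<in>J i. bb i j t \<theta>)"
    and decomp_o: "obs = (\<Union>k\<in>K. ok k)"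
    and nonempty: "\<forall>i\<in>I. \<forall>j\<in>J i. \<forall>t \<theta>. bb i j t \<theta> \<noteq> {}" "\<forall>k\<in>K. ok k \<noteq> {}"
    and smooth_dist: "\<forall>i\<in>I. \<forall>j\<in>J i. \<forall>k\<in>K.
                        C2_on UNIV (\<lambda>(t, \<theta>). setdist (bb i j t \<theta>) (ok k))"
    \<comment> \<open>Assumption 2\<close>
    and bounded_feasible: "bounded {\<theta>. \<forall>i\<in>I. \<forall>t\<in>{0..T}. setdist (b i t \<theta>) obs \<ge> d0}"
    \<comment> \<open>Assumption 3\<close>
    and Pen_smooth: "C2_on {0<..} Pen"
    and Pen_mono: "\<forall>x y. 0 < x \<longrightarrow> x \<le> y \<longrightarrow> Pen y \<le> Pen x"
    and Pen_lim0: "filterlim Pen at_top (at_right 0)"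
    and Pen_liminf: "(Pen \<longlongrightarrow> 0) at_top"
    and Pen_lim0x: "filterlim (\<lambda>x. x * Pen x) at_top (at_right 0)"
    \<comment> \<open>problem data\<close>
    and d0_nonneg: "d0 \<ge> 0"
    and Obj_smooth: "twice_differentiable_on UNIV Obj"
    and L1: "\<forall>i\<in>I. \<forall>j\<in>J i. \<forall>k\<in>K. \<forall>\<theta>'. \<forall>t1\<in>{0..T}. \<forall>t2\<in>{0..T}.
               \<bar>setdist (bb i j t1 \<theta>') (ok k) - setdist (bb i j t2 \<theta>') (ok k)\<bar> \<le> L1 * \<bar>t1 - t2\<bar>"
    and L2_pos: "L2 > 0" and eta_pos: "\<eta> > 0"
    and M_bounds: "0 < \<beta>l" "\<beta>l \<le> \<beta>u"
        "\<forall>H x. \<beta>l * (x \<bullet> x) \<le> x \<bullet> (M H *v x) \<and> x \<bullet> (M H *v x) \<le> \<beta>u * (x \<bullet> x)"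
    and c: "0 < c" "c < 1"
    and alpha0: "\<alpha>0 > 0"
    and gamma_ls: "0 < \<gamma>ls" "\<gamma>ls < 1"
    and gamma: "0 < \<gamma>" "\<gamma> < 1"
    and mu0: "\<mu>0 > 0"
    and eps: "\<epsilon>\<alpha>0 > 0" "\<epsilon>d > 0" "\<epsilon>\<mu> > 0"
    \<comment> \<open>feasible (strictly, so that the penalized objective is finite) initial parameter\<close>
    and feasible0: "\<forall>i\<in>I. \<forall>t\<in>{0..T}. setdist (b i t \<theta>0) obs > d0"
    and Q0_part: "\<forall>p\<in>Trip. is_partition T (Q0 p)"
    \<comment> \<open>a Line-Search call made by Algorithm 1 with arguments (theta, d, eps_alpha)\<close>
    and call: "alg_reach Obj Pen Dist Trip d0 L1 L2 \<eta> M c \<gamma>ls \<alpha>0 \<gamma> \<epsilon>d \<epsilon>\<mu> \<theta>0 \<mu>0 Q0 \<epsilon>\<alpha>0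
                 (Inner \<theta> \<mu> Q \<epsilon> d)"
    and call_d: "infnorm d > \<epsilon>d"
  shows "(\<forall>s sub. s 0 = (Q, \<epsilon>, \<alpha>0, d) \<and>
            (\<forall>n. ls_step Obj Pen Dist Trip d0 L1 L2 \<eta> M c \<gamma>ls \<mu> \<theta> (s n) (sub n) (s (Suc n)))
            \<longrightarrow> finite {n. sub n})
       \<and> \<not> (\<exists>s sub. s 0 = (Q, \<epsilon>, \<alpha>0, d) \<and>
            (\<forall>n. ls_step Obj Pen Dist Trip d0 L1 L2 \<eta> M c \<gamma>ls \<mu> \<theta> (s n) (sub n) (s (Suc n))))"
proof -
  have "finite Trip" unfolding Trip_def using fin by auto
  have Dist_C2: "C2_on UNIV (\<lambda>(t, y). Dist p t y)" if "p \<in> Trip" for p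
    using smooth_dist that by (auto simp: Dist_def Trip_def)
  have lipschitz: "\<bar>Dist p t1 y - Dist p t2 y\<bar> \<le> L1 * \<bar>t1 - t2\<bar>"
    if "p \<in> Trip" "t1 \<in> {0..T}" "t2 \<in> {0..T}" for p y t1 t2
    using L1 that by (auto simp: Dist_def Trip_def)
  have "strictly_feasible Dist Trip T d0 \<theta>0"
    unfolding Dist_def Trip_def using decomp_b decomp_o nonempty feasible0
    by (rule strictly_feasible_decomposition)
  with alg_reach_invariant[OF call T_pos L2_pos gamma_ls(1) lipschitz _ Q0_part eps(1)]
  have "\<forall>p\<in>Trip. is_partition T (Q p)" "strictly_feasible Dist Trip T d0 \<theta>" "0 < \<epsilon>"
    "d \<in> directions M (energy Obj Pen Dist Trip d0 \<mu> Q) \<theta>"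
    by simp_all
  moreover have "\<And>H x. \<beta>l * (x \<bullet> x) \<le> x \<bullet> (M H *v x)" using M_bounds(3) by blast
  ultimately have "\<nexists>s sub. s 0 = (Q, \<epsilon>, \<alpha>0, d) \<and>
      (\<forall>n. ls_step Obj Pen Dist Trip d0 L1 L2 \<eta> M c \<gamma>ls \<mu> \<theta> (s n) (sub n) (s (Suc n)))"
    using line_search_terminates[where Dist = Dist and Trip = Trip, OF \<open>finite Trip\<close> eta_pos c(2) gamma_ls
        Dist_C2 Pen_smooth Obj_smooth _ M_bounds(1)] alpha0
    by blast
  then show ?thesis by blast
qed

end
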